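(* Let $N\ge1$, let $a_1,\dots,a_N\ge 0$, let $b_1,\dots,b_N>0$ be pairwise distinct, set $a=\sum_{j=1}^Na_j$, and let $u_0\in\mathbb{R}$. Let $p(t)=(u(t),v_1(t),\dots,v_N(t))$ be the solution of $$\dot u=-a u+b_1v_1,\quad \dot v_j=a_ju-b_jv_j+b_{j+1}v_{j+1}\ (1\le j\le N-1),\quad \dot v_N=a_Nu-b_Nv_N,$$ with $p(0)=(u_0,0,\dots,0)$. Then $u$ solves the memory equation $$\dot u(t)=-a\,u(t)+\int_0^tK(t-s)u(s)\,ds,\qquad u(0)=u_0,$$ where $K(t)=\sum_{j=1}^Na_jK_j(t)$ with $K_j(t)=\sum_{i=1}^j b_i\psi_i^je^{-b_it}$ and $\psi_i^j=\prod_{k=1,k\neq i}^j\frac{b_k}{b_k-b_i}$. Moreover $a=k(0)$ where $k$ is the Laplace transform of $K$, each $K_j(t)\ge0$ and hence $K(t)\ge 0$ for all $t\ge0$, and $u(t)\to u_0/Z$ as $t\to\infty$, where $$Z=1+\sum_{i=1}^N\frac1{b_i}\sum_{j=i}^Na_j.$$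
   Context: The system is $\dot p=A^*p$ where $A^*$ is the $(N+1)\times(N+1)$ matrix with first row $(-a,b_1,0,\dots,0)$, and for $j=1,\dots,N$ the row $j$ (indexing rows from $0$) has entry $a_j$ in column $0$, $-b_j$ on the diagonal and $b_{j+1}$ in column $j+1$ (if $j<N$), all other entries zero. It is the transpose of a Markov generator (nonnegative off-diagonal entries, zero column sums). The Laplace transform is $k(\lambda)=\int_0^\infty e^{-\lambda t}K(t)\,dt$; one has $k(\lambda)=\sum_j a_j\prod_{i=1}^j\frac{b_i}{\lambda+b_i}$. *)

theory Defs
  imports "HOL-Analysis.Analysis"
begin

definition psi :: "(nat \<Rightarrow> real) \<Rightarrow> nat \<Rightarrow> nat \<Rightarrow> real" where
  "psi b i j = (\<Prod>k\<in>{1..j} - {i}. b k / (b k - b i))"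

definition Kj :: "(nat \<Rightarrow> real) \<Rightarrow> nat \<Rightarrow> real \<Rightarrow> real" where
  "Kj b j t = (\<Sum>i=1..j. b i * psi b i j * exp (- b i * t))"

definition Kmem :: "nat \<Rightarrow> (nat \<Rightarrow> real) \<Rightarrow> (nat \<Rightarrow> real) \<Rightarrow> real \<Rightarrow> real" where
  "Kmem N a b t = (\<Sum>j=1..N. a j * Kj b j t)"

definition laplace :: "(real \<Rightarrow> real) \<Rightarrow> real \<Rightarrow> real" where
  "laplace K lam = integral {0..} (\<lambda>t. exp (- lam * t) * K t)"

end

theory Submission
  imports Defs "HOL-Real_Asymp.Real_Asymp"
begin

text \<open>
  Each \<open>v j\<close> solves a scalar linear ODE driven by \<open>u\<close> and \<open>v (j + 1)\<close>, so by downward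
  induction on \<open>j\<close> it is a combination of the convolutions
  \<open>\<integral>\<^sub>0\<^sup>t exp (- b i (t - s)) u s ds\<close>, \<open>i \<ge> j\<close>, with coefficients built from the
  partial-fraction coefficients \<open>\<psi>\<close>; for \<open>j = 1\<close> this reads \<open>b 1 v 1 = \<integral>\<^sub>0\<^sup>t K (t - s) u s ds\<close>.
  The identities \<open>\<Sum>\<^sub>i \<psi>\<^sub>i\<^sup>j = 1\<close> and \<open>\<Sum>\<^sub>i b i \<psi>\<^sub>i\<^sup>j = 0\<close> (\<open>j \<ge> 2\<close>) give \<open>\<integral> K\<^sub>j = 1\<close> and
  \<open>K\<^sub>j 0 = 0\<close>, and \<open>K\<^sub>j\<^sub>+\<^sub>1' = b (j + 1) (K\<^sub>j - K\<^sub>j\<^sub>+\<^sub>1)\<close> then yields \<open>K\<^sub>j \<ge> 0\<close> by induction.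

  For the limit, \<open>u + \<Sum> v j\<close> is conserved. Once the trailing components with \<open>a j = 0\<close>
  (which stay \<open>0\<close>) are discarded, the stationary state has positive entries, and the weighted
  quadratic deviation from it is a Lyapunov function whose dissipation dominates it by a
  discrete Poincare inequality; hence it decays exponentially.
\<close>

section \<open>Partial fractions\<close>

definition pf_coeff :: "('a \<Rightarrow> 'b::field) \<Rightarrow> 'a set \<Rightarrow> 'a \<Rightarrow> 'b" where
  "pf_coeff b S i = (\<Prod>k\<in>S - {i}. b k / (b k - b i))"

lemma pf_coeff_singleton [simp]: "pf_coeff b {i} i = 1"
  by (simp add: pf_coeff_def)

lemma pf_coeff_insert:
  assumes "finite S" "j \<notin> S" "i \<in> S"
  shows "pf_coeff b (insert j S) i = pf_coeff b S i * (b j / (b j - b i))"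
proof -
  have "insert j S - {i} = insert j (S - {i})" using assms by auto
  then show ?thesis using assms unfolding pf_coeff_def by (simp add: mult.commute)
qed

lemma pf_coeff_insert_self:
  assumes "j \<notin> S"
  shows "pf_coeff b (insert j S) j = (\<Prod>k\<in>S. b k / (b k - b j))"
  using assms unfolding pf_coeff_def by (metis Diff_insert_absorb)

lemma two_pole_partial_fractions:
  fixes x y l :: "'a::field"
  assumes "x \<noteq> y" "l + x \<noteq> 0" "l + y \<noteq> 0"
  shows "y / (y - x) * (x / (l + x)) + x / (x - y) * (y / (l + y)) = x / (l + x) * (y / (l + y))"
proof -
  have "y / (y - x) = - (y / (x - y))"
    by (metis minus_diff_eq minus_divide_right)
  then have "y / (y - x) * (x / (l + x)) + x / (x - y) * (y / (l + y))
      = x * y / (x - y) * (1 / (l + y) - 1 / (l + x))"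
    by (simp add: divide_inverse algebra_simps)
  also have "1 / (l + y) - 1 / (l + x) = (x - y) / ((l + x) * (l + y))"
    using assms(2,3) by (simp add: diff_frac_eq)
  finally show ?thesis
    using assms(1) by simp
qed

lemma partial_fraction_expansion:
  fixes b :: "'a \<Rightarrow> 'b::field"
  assumes "finite S" "S \<noteq> {}" "inj_on b S" "\<forall>k\<in>S. lam + b k \<noteq> 0"
  shows "(\<Prod>k\<in>S. b k / (lam + b k)) = (\<Sum>i\<in>S. pf_coeff b S i * (b i / (lam + b i)))"
  using assms
proof (induction S arbitrary: lam rule: finite_ne_induct)
  case (singleton j)
  then show ?case by simp
next
  case (insert j S)
  let ?T = "insert j S"
  have inj: "inj_on b S" and bne: "\<And>i. i \<in> S \<Longrightarrow> b i \<noteq> b j"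
    using insert.prems insert.hyps by (auto simp: inj_on_insert image_iff)
  have lam: "\<forall>k\<in>S. lam + b k \<noteq> 0" "lam + b j \<noteq> 0" using insert.prems by auto
  \<comment> \<open>The coefficient of the new pole is the expansion for \<open>S\<close> evaluated at \<open>lam = - b j\<close>.\<close>
  have self: "pf_coeff b ?T j = (\<Sum>i\<in>S. pf_coeff b S i * (b i / (b i - b j)))"
  proof -
    have "pf_coeff b ?T j = (\<Prod>k\<in>S. b k / (- b j + b k))"
      unfolding pf_coeff_insert_self[OF insert.hyps(3)] by (rule prod.cong) auto
    also have "\<dots> = (\<Sum>i\<in>S. pf_coeff b S i * (b i / (- b j + b i)))"
      using bne by (intro insert.IH[OF inj]) (auto simp: add_eq_0_iff)
    finally show ?thesis by simp
  qed
  have split: "pf_coeff b S i * (b i / (b i - b j)) * (b j / (lam + b j))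
      + pf_coeff b ?T i * (b i / (lam + b i))
      = pf_coeff b S i * (b i / (lam + b i)) * (b j / (lam + b j))" if i: "i \<in> S" for i
  proof -
    have "b i / (b i - b j) * (b j / (lam + b j)) + b j / (b j - b i) * (b i / (lam + b i))
        = b j / (lam + b j) * (b i / (lam + b i))"
      using bne[OF i] lam i by (intro two_pole_partial_fractions) auto
    then show ?thesis
      unfolding pf_coeff_insert[OF insert.hyps(1,3) i]
      by (metis (no_types, lifting) distrib_left mult.assoc mult.commute)
  qed
  have "(\<Sum>i\<in>?T. pf_coeff b ?T i * (b i / (lam + b i)))
      = pf_coeff b ?T j * (b j / (lam + b j)) + (\<Sum>i\<in>S. pf_coeff b ?T i * (b i / (lam + b i)))"
    using insert.hyps by simp
  also have "\<dots> = (\<Sum>i\<in>S. pf_coeff b S i * (b i / (b i - b j)) * (b j / (lam + b j))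
              + pf_coeff b ?T i * (b i / (lam + b i)))"
    by (simp only: self sum_distrib_right sum.distrib)
  also have "\<dots> = (\<Sum>i\<in>S. pf_coeff b S i * (b i / (lam + b i)) * (b j / (lam + b j)))"
    by (rule sum.cong[OF refl split])
  also have "\<dots> = (\<Sum>i\<in>S. pf_coeff b S i * (b i / (lam + b i))) * (b j / (lam + b j))"
    by (rule sum_distrib_right[symmetric])
  also have "\<dots> = (\<Prod>k\<in>?T. b k / (lam + b k))"
    using insert.hyps insert.IH[OF inj lam(1)] by (simp add: mult.commute)
  finally show ?case by simp
qed

lemma sum_pf_coeff_eq_1:
  fixes b :: "'a \<Rightarrow> 'b::field"
  assumes "finite S" "S \<noteq> {}" "inj_on b S" "\<forall>k\<in>S. b k \<noteq> 0"
  shows "(\<Sum>i\<in>S. pf_coeff b S i) = 1"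
  using partial_fraction_expansion[OF assms(1-3), of 0] assms(4) by simp

lemma sum_pf_coeff_weighted_eq_0:
  fixes b :: "'a \<Rightarrow> 'b::field"
  assumes "finite S" "card S \<ge> 2" "inj_on b S"
  shows "(\<Sum>i\<in>S. b i * pf_coeff b S i) = 0"
proof -
  obtain j where j: "j \<in> S" using assms(2) by fastforce
  define S' where "S' = S - {j}"
  have "card S' \<ge> 1" using j assms(1,2) by (simp add: S'_def card_Diff_singleton)
  then have "S' \<noteq> {}" by auto
  then have S: "S = insert j S'" "j \<notin> S'" "finite S'" "S' \<noteq> {}"
    using j assms(1) by (auto simp: S'_def)
  have bne: "\<And>i. i \<in> S' \<Longrightarrow> b i \<noteq> b j"
    using assms(3) S by (auto simp: inj_on_insert image_iff)
  \<comment> \<open>Expanding at \<open>lam = - b j\<close> computes the term of \<open>j\<close>; it cancels the terms of \<open>S'\<close>.\<close>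
  have "pf_coeff b S j = (\<Prod>k\<in>S'. b k / (- b j + b k))"
    unfolding S(1) pf_coeff_insert_self[OF S(2)] by (rule prod.cong) auto
  also have "\<dots> = (\<Sum>i\<in>S'. pf_coeff b S' i * (b i / (- b j + b i)))"
    using S assms(3) bne by (intro partial_fraction_expansion) (auto simp: inj_on_insert)
  finally have self: "b j * pf_coeff b S j = (\<Sum>i\<in>S'. b j * pf_coeff b S' i * (b i / (b i - b j)))"
    by (simp add: sum_distrib_left mult.assoc)
  have "(\<Sum>i\<in>S'. b i * pf_coeff b S i) = (\<Sum>i\<in>S'. - (b j * pf_coeff b S' i * (b i / (b i - b j))))"
  proof (rule sum.cong[OF refl])
    fix i assume i: "i \<in> S'"
    then have "b i - b j \<noteq> 0" "b j - b i \<noteq> 0" using bne[OF i] by auto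
    then show "b i * pf_coeff b S i = - (b j * pf_coeff b S' i * (b i / (b i - b j)))"
      unfolding S(1) pf_coeff_insert[OF S(3,2) i] by (simp add: field_simps)
  qed
  then show ?thesis using S self by (simp add: sum_negf)
qed

section \<open>The kernels\<close>

lemma psi_eq_pf_coeff: "psi b i j = pf_coeff b {1..j} i"
  by (simp add: psi_def pf_coeff_def)

lemma psi_Suc:
  assumes "i \<in> {1..j}"
  shows "psi b i (Suc j) = psi b i j * (b (Suc j) / (b (Suc j) - b i))"
proof -
  have "{1..Suc j} = insert (Suc j) {1..j}" by auto
  then show ?thesis using pf_coeff_insert[of "{1..j}" "Suc j" i b] assms by (simp add: psi_eq_pf_coeff)
qed

lemma Kj_Suc_has_real_derivative:
  assumes "inj_on b {1..Suc j}"
  shows "(Kj b (Suc j) has_real_derivative b (Suc j) * (Kj b j t - Kj b (Suc j) t)) (at t)"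
proof -
  define c where "c i = b i * psi b i (Suc j) * exp (- b i * t)" for i
  have deriv: "(Kj b (Suc j) has_real_derivative (\<Sum>i=1..Suc j. - b i * c i)) (at t)"
    unfolding Kj_def[abs_def] c_def
    by (auto intro!: derivative_eq_intros sum.cong simp: algebra_simps)
  have "(b (Suc j) - b i) * c i = b (Suc j) * (b i * psi b i j * exp (- b i * t))"
    if i: "i \<in> {1..j}" for i
  proof -
    have "b (Suc j) \<noteq> b i" using inj_onD[OF assms, of "Suc j" i] i by auto
    then show ?thesis unfolding c_def psi_Suc[OF i] by (simp add: field_simps)
  qed
  then have lower: "(\<Sum>i=1..j. (b (Suc j) - b i) * c i) = b (Suc j) * Kj b j t"
    by (simp add: Kj_def sum_distrib_left)
  have "(\<Sum>i=1..Suc j. - b i * c i)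
      = (\<Sum>i=1..Suc j. (b (Suc j) - b i) * c i) - b (Suc j) * (\<Sum>i=1..Suc j. c i)"
    by (simp add: left_diff_distrib sum_subtractf sum_distrib_left sum_negf distrib_left)
  also have "(\<Sum>i=1..Suc j. (b (Suc j) - b i) * c i) = (\<Sum>i=1..j. (b (Suc j) - b i) * c i)"
    by simp
  also note lower
  also have "(\<Sum>i=1..Suc j. c i) = Kj b (Suc j) t"
    by (simp add: Kj_def c_def)
  finally have "(\<Sum>i=1..Suc j. - b i * c i) = b (Suc j) * Kj b j t - b (Suc j) * Kj b (Suc j) t" .
  with deriv show ?thesis
    by (simp only: right_diff_distrib)
qed

lemma Kj_at_0:
  assumes "j \<ge> 2" "inj_on b {1..j}"
  shows "Kj b j 0 = 0"
  using sum_pf_coeff_weighted_eq_0[of "{1..j}" b] assms by (simp add: Kj_def psi_eq_pf_coeff)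

lemma Kj_nonneg:
  assumes "j \<ge> 1" "inj_on b {1..j}" "\<forall>k\<in>{1..j}. b k \<ge> 0" "t \<ge> 0"
  shows "Kj b j t \<ge> 0"
  using assms
proof (induction j arbitrary: t rule: dec_induct)
  case base
  then show ?case by (simp add: Kj_def psi_def)
next
  case (step j)
  have "inj_on b {1..j}" using step.prems(1) by (rule inj_on_subset) auto
  then have IH: "Kj b j x \<ge> 0" if "x \<ge> 0" for x
    using step.IH[of x] step.prems that by auto
  define g where "g x = exp (b (Suc j) * x) * Kj b (Suc j) x" for x
  have "(g has_real_derivative exp (b (Suc j) * x) * (b (Suc j) * Kj b j x)) (at x)" for x
    unfolding g_def using Kj_Suc_has_real_derivative[OF step.prems(1), of x]
    by (auto intro!: derivative_eq_intros simp: algebra_simps)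
  then have "g 0 \<le> g t"
    by (rule deriv_nonneg_imp_mono) (use IH step.prems in auto)
  moreover have "g 0 = 0"
    using Kj_at_0[of "Suc j" b] step.prems step.hyps by (simp add: g_def)
  ultimately show ?case by (simp add: g_def zero_le_mult_iff)
qed

lemma Kj_has_integral_1:
  assumes "j \<ge> 1" "inj_on b {1..j}" "\<forall>k\<in>{1..j}. b k > 0"
  shows "(Kj b j has_integral 1) {0..}"
proof -
  have "(Kj b j has_integral (\<Sum>i=1..j. b i * psi b i j * (exp (- b i * 0) / b i))) {0..}"
    unfolding Kj_def[abs_def] using assms(3)
    by (intro has_integral_sum has_integral_mult_right has_integral_exp_minus_to_infinity) auto
  moreover have "(\<Sum>i=1..j. b i * psi b i j * (exp (- b i * 0) / b i)) = (\<Sum>i=1..j. pf_coeff b {1..j} i)"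
  proof (rule sum.cong[OF refl])
    fix i assume "i \<in> {1..j}"
    then have "b i > 0" using assms(3) by blast
    then show "b i * psi b i j * (exp (- b i * 0) / b i) = pf_coeff b {1..j} i"
      by (simp add: psi_eq_pf_coeff)
  qed
  moreover have "(\<Sum>i=1..j. pf_coeff b {1..j} i) = 1"
    using assms by (intro sum_pf_coeff_eq_1) auto
  ultimately show ?thesis by simp
qed

lemma Kmem_has_integral:
  assumes "inj_on b {1..N}" "\<forall>k\<in>{1..N}. b k > 0"
  shows "(Kmem N a b has_integral (\<Sum>j=1..N. a j)) {0..}"
proof -
  have "((\<lambda>t. \<Sum>j=1..N. a j * Kj b j t) has_integral (\<Sum>j=1..N. a j * 1)) {0..}"
    using assms by (intro has_integral_sum has_integral_mult_right Kj_has_integral_1)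
      (auto intro: inj_on_subset)
  then show ?thesis by (simp add: Kmem_def[abs_def])
qed

lemma decay_ode_solution_eq_0:
  fixes w :: "real \<Rightarrow> real"
  assumes "\<And>t. t \<ge> 0 \<Longrightarrow> (w has_real_derivative - c * w t) (at t within {0..})"
    and "w 0 = 0" "t \<ge> 0"
  shows "w t = 0"
proof -
  define g where "g t = exp (c * t) * w t" for t
  have "(g has_real_derivative 0) (at x within {0..})" if "x \<in> {0..}" for x
  proof -
    have "(g has_real_derivative exp (c * x) * c * w x + exp (c * x) * (- c * w x)) (at x within {0..})"
      unfolding g_def using assms(1)[of x] that by (auto intro!: derivative_eq_intros)
    then show ?thesis by (simp add: algebra_simps)
  qed
  then obtain k where "\<forall>x\<in>{0..}. g x = k"
    using has_field_derivative_zero_constant[of "{0..}" g] by auto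
  then have "g t = g 0" using assms(3) by auto
  then show ?thesis using assms(2) by (simp add: g_def)
qed

lemma exp_convolution_has_real_derivative:
  fixes u :: "real \<Rightarrow> real"
  assumes "continuous_on {0..} u" "t \<ge> 0"
  shows "((\<lambda>t. exp (- c * t) * integral {0..t} (\<lambda>s. exp (c * s) * u s)) has_real_derivative
          - c * (exp (- c * t) * integral {0..t} (\<lambda>s. exp (c * s) * u s)) + u t) (at t within {0..})"
proof -
  have "continuous_on {0..t+1} (\<lambda>s. exp (c * s) * u s)"
    by (intro continuous_intros continuous_on_subset[OF assms(1)]) auto
  then have "((\<lambda>x. integral {0..x} (\<lambda>s. exp (c * s) * u s)) has_real_derivative exp (c * t) * u t)
      (at t within {0..t+1})"
    by (rule integral_has_real_derivative) (use assms(2) in auto)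
  moreover have "at t within {0..t+1} = at t within {0..}"
    by (rule at_within_nhd[of t "{..<t+1}"]) auto
  ultimately have "((\<lambda>x. integral {0..x} (\<lambda>s. exp (c * s) * u s)) has_real_derivative exp (c * t) * u t)
      (at t within {0..})"
    by simp
  then have "((\<lambda>t. exp (- c * t) * integral {0..t} (\<lambda>s. exp (c * s) * u s)) has_real_derivative
      exp (- c * t) * (- c) * integral {0..t} (\<lambda>s. exp (c * s) * u s) + exp (- c * t) * (exp (c * t) * u t))
      (at t within {0..})"
    by (auto intro!: derivative_eq_intros)
  moreover have "exp (- c * t) * (exp (c * t) * u t) = u t"
    by (simp add: mult.assoc[symmetric] exp_add[symmetric])
  ultimately show ?thesis by (simp only: algebra_simps)
qed

lemma sum_triangle_swap:
  fixes f :: "nat \<Rightarrow> nat \<Rightarrow> 'a::comm_monoid_add"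
  shows "(\<Sum>i=m..n. \<Sum>j=i..n. f i j) = (\<Sum>j=m..n. \<Sum>i=m..j. f i j)"
proof -
  have "(\<Sum>i=m..n. \<Sum>j=i..n. f i j) = (\<Sum>i\<in>{m..n}. \<Sum>j\<in>{j. j \<in> {m..n} \<and> i \<le> j}. f i j)"
    by (intro sum.cong) auto
  also have "\<dots> = (\<Sum>j\<in>{m..n}. \<Sum>i\<in>{i. i \<in> {m..n} \<and> i \<le> j}. f i j)"
    by (rule sum.swap_restrict) auto
  also have "\<dots> = (\<Sum>j=m..n. \<Sum>i=m..j. f i j)"
    by (intro sum.cong) auto
  finally show ?thesis .
qed

text \<open>The last term vanishes when \<open>s (Suc n) = 0\<close>; it is kept to make the induction go through.\<close>
lemma sum_quadratic_by_parts:
  fixes g s :: "nat \<Rightarrow> real"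
  shows "g 0 * (s 1 * (g 1 - g 0))
      + (\<Sum>j=1..n. g j * ((s j - s (Suc j)) * g 0 - s j * g j + s (Suc j) * g (Suc j)))
    = - ((\<Sum>j=1..n. s j * (g j - g (j - 1))^2) + (\<Sum>j=1..n. (s j - s (Suc j)) * (g j - g 0)^2)) / 2
      + s (Suc n) * (g n * g (Suc n) - g n * g 0 - (g n - g 0)^2 / 2)"
  by (induction n) (simp_all add: field_simps power2_eq_square)

lemma discrete_poincare_inequality:
  fixes g p :: "nat \<Rightarrow> real"
  assumes p: "\<And>j. j \<in> {1..n} \<Longrightarrow> p j \<ge> 0"
    and balance: "g 0 + (\<Sum>j=1..n. p j * g j) = 0"
  shows "(g 0)^2 + (\<Sum>j=1..n. p j * (g j)^2)
    \<le> real n * (\<Sum>j=1..n. p j) * (\<Sum>k=1..n. (g k - g (k - 1))^2)"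
proof -
  let ?P = "\<Sum>j=1..n. p j" and ?Q = "\<Sum>k=1..n. (g k - g (k - 1))^2"
  have "(\<Sum>j=1..n. p j * (g j - g 0)^2)
      = (\<Sum>j=1..n. p j * (g j)^2) - 2 * g 0 * (\<Sum>j=1..n. p j * g j) + (g 0)^2 * ?P"
    by (simp add: power2_diff algebra_simps sum.distrib sum_subtractf sum_distrib_left
        sum_distrib_right)
  also have "\<dots> = (g 0)^2 + (\<Sum>j=1..n. p j * (g j)^2) + (g 0)^2 * (1 + ?P)"
  proof -
    have "(\<Sum>j=1..n. p j * g j) = - g 0" using balance by linarith
    then show ?thesis by (simp add: algebra_simps power2_eq_square)
  qed
  moreover have "?P \<ge> 0" using p by (intro sum_nonneg) auto
  ultimately have "(g 0)^2 + (\<Sum>j=1..n. p j * (g j)^2) \<le> (\<Sum>j=1..n. p j * (g j - g 0)^2)"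
    by simp
  also have "\<dots> \<le> (\<Sum>j=1..n. p j * (real n * ?Q))"
  proof (rule sum_mono)
    fix j assume j: "j \<in> {1..n}"
    have "g j - g 0 = (\<Sum>k=1..j. g k - g (k - 1))"
      by (induction j) simp_all
    then have "(g j - g 0)^2 \<le> (\<Sum>k=1..j. (g k - g (k - 1))^2) * real (card {1..j})"
      using sum_squared_le_sum_of_squares[of "\<lambda>k. g k - g (k - 1)" "{1..j}"] by simp
    also have "\<dots> \<le> ?Q * real n"
      using j by (intro mult_mono sum_mono2 sum_nonneg) auto
    finally show "p j * (g j - g 0)^2 \<le> p j * (real n * ?Q)"
      using p[OF j] by (simp add: mult_left_mono mult.commute)
  qed
  also have "\<dots> = real n * ?P * ?Q"
    by (simp only: sum_distrib_right[symmetric]) (simp add: mult_ac)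
  finally show ?thesis .
qed

lemma exp_decay_of_differential_inequality:
  fixes V V' :: "real \<Rightarrow> real"
  assumes deriv: "\<And>x. x \<ge> 0 \<Longrightarrow> (V has_real_derivative V' x) (at x within {0..})"
    and ineq: "\<And>x. x \<ge> 0 \<Longrightarrow> V' x \<le> - V x / C"
    and "C > 0" "t \<ge> 0"
  shows "V t \<le> V 0 * exp (- t / C)"
proof -
  define h where "h x = V x * exp (x / C)" for x
  have h_deriv: "(h has_real_derivative (V' x + V x / C) * exp (x / C)) (at x within {0..})"
    if "x \<ge> 0" for x
    unfolding h_def using deriv[OF that] \<open>C > 0\<close>
    by (auto intro!: derivative_eq_intros simp: distrib_right)
  have "h t \<le> h 0"
  proof (rule DERIV_nonpos_imp_decreasing_open[OF \<open>t \<ge> 0\<close>])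
    fix x :: real assume x: "0 < x" "x < t"
    have "at x within {0..} = at x"
      by (rule at_within_interior) (use x in simp)
    then have "(h has_real_derivative (V' x + V x / C) * exp (x / C)) (at x)"
      using h_deriv[of x] x by (metis less_imp_le)
    moreover have "(V' x + V x / C) * exp (x / C) \<le> 0"
      using ineq[of x] x by (intro mult_nonpos_nonneg) auto
    ultimately show "\<exists>y. (h has_real_derivative y) (at x) \<and> y \<le> 0"
      by blast
  next
    have "continuous_on {0..} h"
      unfolding continuous_on_eq_continuous_within using DERIV_continuous[OF h_deriv] by auto
    then show "continuous_on {0..t} h"
      by (rule continuous_on_subset) auto
  qed
  have "V t = h t * exp (- t / C)"
    by (simp add: h_def mult.assoc flip: exp_add)
  also have "\<dots> \<le> h 0 * exp (- t / C)"
    using \<open>h t \<le> h 0\<close> by (rule mult_right_mono) simp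
  finally show ?thesis
    by (simp add: h_def)
qed

lemma last_positive_index:
  fixes a :: "nat \<Rightarrow> real"
  assumes "\<exists>j\<in>{1..N}. a j > 0" "\<And>j. j \<in> {1..N} \<Longrightarrow> a j \<ge> 0"
  obtains J where "J \<in> {1..N}" "a J > 0" "\<And>j. J < j \<Longrightarrow> j \<le> N \<Longrightarrow> a j = 0"
proof
  define J where "J = Max {j\<in>{1..N}. a j > 0}"
  have "J \<in> {j\<in>{1..N}. a j > 0}"
    unfolding J_def using assms(1) by (intro Max_in) auto
  then show "J \<in> {1..N}" "a J > 0" by auto
  show "a j = 0" if "J < j" "j \<le> N" for j
  proof -
    have "\<not> a j > 0"
    proof
      assume "a j > 0"
      then have "j \<le> J"
        unfolding J_def using that \<open>J \<in> {1..N}\<close> by (intro Max_ge) auto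
      with that show False by simp
    qed
    then show ?thesis using assms(2)[of j] that \<open>J \<in> {1..N}\<close> by auto
  qed
qed

section \<open>The chain and its memory equation\<close>

locale linear_chain =
  fixes N :: nat and a b :: "nat \<Rightarrow> real" and u0 :: real
    and u :: "real \<Rightarrow> real" and v :: "nat \<Rightarrow> real \<Rightarrow> real"
  assumes N: "N \<ge> 1"
    and a_nonneg: "\<And>j. j \<in> {1..N} \<Longrightarrow> a j \<ge> 0"
    and b_pos: "\<And>j. j \<in> {1..N} \<Longrightarrow> b j > 0"
    and b_distinct: "inj_on b {1..N}"
    and u_ode: "\<And>t. t \<ge> 0 \<Longrightarrow>
       (u has_real_derivative (- (\<Sum>j=1..N. a j) * u t + b 1 * v 1 t)) (at t within {0..})"
    and v_ode: "\<And>j t. j \<in> {1..<N} \<Longrightarrow> t \<ge> 0 \<Longrightarrow>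
       (v j has_real_derivative (a j * u t - b j * v j t + b (j+1) * v (j+1) t)) (at t within {0..})"
    and vN_ode: "\<And>t. t \<ge> 0 \<Longrightarrow>
       (v N has_real_derivative (a N * u t - b N * v N t)) (at t within {0..})"
    and u_init: "u 0 = u0"
    and v_init: "\<And>j. j \<in> {1..N} \<Longrightarrow> v j 0 = 0"
begin

lemma continuous_on_u: "continuous_on {0..} u"
  unfolding continuous_on_eq_continuous_within using DERIV_continuous[OF u_ode] by auto

lemma b_inj_on: "S \<subseteq> {1..N} \<Longrightarrow> inj_on b S"
  using b_distinct inj_on_subset by blast

definition conv_exp :: "nat \<Rightarrow> real \<Rightarrow> real" where
  "conv_exp i t = exp (- b i * t) * integral {0..t} (\<lambda>s. exp (b i * s) * u s)"

definition repr_coeff :: "nat \<Rightarrow> nat \<Rightarrow> real" where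
  "repr_coeff m i = (\<Sum>j=i..N. a j * b i * pf_coeff b {m..j} i) / b m"

definition v_repr :: "nat \<Rightarrow> real \<Rightarrow> real" where
  "v_repr m t = (\<Sum>i=m..N. repr_coeff m i * conv_exp i t)"

lemma conv_exp_has_real_derivative:
  "t \<ge> 0 \<Longrightarrow> (conv_exp i has_real_derivative - b i * conv_exp i t + u t) (at t within {0..})"
  using exp_convolution_has_real_derivative[OF continuous_on_u, of t "b i"]
  by (simp add: conv_exp_def[abs_def])

lemma repr_coeff_step:
  assumes "1 \<le> m" "m < i" "i \<le> N"
  shows "repr_coeff m i * (b m - b i) = b (Suc m) * repr_coeff (Suc m) i"
proof -
  have pos: "b m > 0" "b (Suc m) > 0" using b_pos assms by auto
  have "b m \<noteq> b i" using inj_onD[OF b_distinct, of m i] assms by auto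
  moreover have "pf_coeff b {m..j} i = pf_coeff b {Suc m..j} i * (b m / (b m - b i))"
    if "j \<in> {i..N}" for j
  proof -
    have "{m..j} = insert m {Suc m..j}" using that assms by auto
    then show ?thesis using pf_coeff_insert[of "{Suc m..j}" m i b] that assms by simp
  qed
  ultimately show ?thesis
    using pos by (simp add: repr_coeff_def sum_distrib_left sum_divide_distrib field_simps)
qed

lemma sum_repr_coeff:
  assumes "m \<in> {1..N}"
  shows "(\<Sum>i=m..N. repr_coeff m i) = a m"
proof -
  have inner: "(\<Sum>i=m..j. b i * pf_coeff b {m..j} i) = (if j = m then b m else 0)"
    if "j \<in> {m..N}" for j
  proof (cases "j = m")
    case False
    then have "card {m..j} \<ge> 2" using that by auto
    then show ?thesis
      using sum_pf_coeff_weighted_eq_0[of "{m..j}" b] b_inj_on[of "{m..j}"] False that assms by simp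
  qed (simp add: pf_coeff_def)
  have "(\<Sum>i=m..N. repr_coeff m i) = (\<Sum>i=m..N. \<Sum>j=i..N. a j * b i * pf_coeff b {m..j} i) / b m"
    by (simp add: repr_coeff_def sum_divide_distrib)
  also have "\<dots> = (\<Sum>j=m..N. a j * (\<Sum>i=m..j. b i * pf_coeff b {m..j} i)) / b m"
    by (simp add: sum_triangle_swap sum_distrib_left mult.assoc)
  also have "(\<Sum>j=m..N. a j * (\<Sum>i=m..j. b i * pf_coeff b {m..j} i))
      = (\<Sum>j=m..N. if j = m then a m * b m else 0)"
    by (rule sum.cong) (auto simp: inner)
  also have "\<dots> = a m * b m"
    using assms by simp
  also have "a m * b m / b m = a m"
    using assms b_pos[of m] by simp
  finally show ?thesis .
qed

lemma v_repr_has_real_derivative: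
  assumes m: "m \<in> {1..N}" and t: "t \<ge> 0"
  shows "(v_repr m has_real_derivative a m * u t - b m * v_repr m t + b (Suc m) * v_repr (Suc m) t)
    (at t within {0..})"
proof -
  let ?C = "repr_coeff m" and ?F = "\<lambda>i. conv_exp i t"
  have deriv: "(v_repr m has_real_derivative (\<Sum>i=m..N. ?C i * (- b i * ?F i + u t))) (at t within {0..})"
    unfolding v_repr_def[abs_def]
    by (intro DERIV_sum DERIV_cmult conv_exp_has_real_derivative t)
  have shifted: "(\<Sum>i=m..N. ?C i * (b i - b m) * ?F i) = - b (Suc m) * v_repr (Suc m) t"
  proof -
    have "(\<Sum>i=m..N. ?C i * (b i - b m) * ?F i) = (\<Sum>i=Suc m..N. ?C i * (b i - b m) * ?F i)"
      using m by (simp add: sum.atLeast_Suc_atMost)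
    also have "\<dots> = (\<Sum>i=Suc m..N. - (b (Suc m) * repr_coeff (Suc m) i * ?F i))"
    proof (rule sum.cong[OF refl])
      fix i assume "i \<in> {Suc m..N}"
      then have "?C i * (b m - b i) = b (Suc m) * repr_coeff (Suc m) i"
        using m by (intro repr_coeff_step) auto
      then show "?C i * (b i - b m) * ?F i = - (b (Suc m) * repr_coeff (Suc m) i * ?F i)"
        by (simp add: algebra_simps)
    qed
    finally show ?thesis
      by (simp add: v_repr_def sum_negf sum_distrib_left mult.assoc)
  qed
  have "(\<Sum>i=m..N. ?C i * (- b i * ?F i + u t))
      = (\<Sum>i=m..N. ?C i * u t - ?C i * (b i - b m) * ?F i - b m * (?C i * ?F i))"
    by (rule sum.cong) (auto simp: algebra_simps)
  also have "\<dots> = (\<Sum>i=m..N. ?C i) * u t - (\<Sum>i=m..N. ?C i * (b i - b m) * ?F i) - b m * v_repr m t"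
    by (simp add: sum_subtractf sum_distrib_left sum_distrib_right v_repr_def)
  also have "\<dots> = a m * u t - b m * v_repr m t + b (Suc m) * v_repr (Suc m) t"
    by (simp add: sum_repr_coeff[OF m] shifted)
  finally show ?thesis
    using deriv by simp
qed

lemma v_eq_v_repr_if_has_real_derivative:
  assumes m: "m \<in> {1..N}" and t: "t \<ge> 0"
    and v_deriv: "\<And>t. t \<ge> 0 \<Longrightarrow>
      (v m has_real_derivative a m * u t - b m * v m t + b (Suc m) * v_repr (Suc m) t) (at t within {0..})"
  shows "v m t = v_repr m t"
proof -
  have "v m t - v_repr m t = 0"
  proof (rule decay_ode_solution_eq_0[of "\<lambda>t. v m t - v_repr m t" "b m"])
    fix t :: real assume "t \<ge> 0"
    from DERIV_diff[OF v_deriv[OF this] v_repr_has_real_derivative[OF m this]]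
    show "((\<lambda>t. v m t - v_repr m t) has_real_derivative - b m * (v m t - v_repr m t)) (at t within {0..})"
      by (simp add: algebra_simps)
  qed (use m t v_init in \<open>auto simp: v_repr_def conv_exp_def\<close>)
  then show ?thesis by simp
qed

lemma v_eq_v_repr:
  assumes "m \<in> {1..N}" "t \<ge> 0"
  shows "v m t = v_repr m t"
proof -
  have "m \<le> N" using assms by simp
  then have "1 \<le> m \<longrightarrow> (\<forall>t\<ge>0. v m t = v_repr m t)"
  proof (induction m rule: inc_induct)
    case base
    have "v_repr (Suc N) t = 0" for t by (simp add: v_repr_def)
    then show ?case
      using N vN_ode by (auto intro: v_eq_v_repr_if_has_real_derivative)
  next
    case (step m)
    have "(v m has_real_derivative a m * u t - b m * v m t + b (Suc m) * v_repr (Suc m) t)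
        (at t within {0..})" if "t \<ge> 0" "1 \<le> m" for t
      using v_ode[of m t] step that by simp
    then show ?case
      using step.hyps by (auto intro: v_eq_v_repr_if_has_real_derivative)
  qed
  then show ?thesis using assms by simp
qed

lemma Kmem_eq_repr_coeff: "Kmem N a b x = b 1 * (\<Sum>i=1..N. repr_coeff 1 i * exp (- b i * x))"
proof -
  have "Kmem N a b x = (\<Sum>j=1..N. \<Sum>i=1..j. a j * b i * pf_coeff b {1..j} i * exp (- b i * x))"
    by (simp add: Kmem_def Kj_def psi_eq_pf_coeff sum_distrib_left mult.assoc)
  also have "\<dots> = (\<Sum>i=1..N. (\<Sum>j=i..N. a j * b i * pf_coeff b {1..j} i) * exp (- b i * x))"
    by (simp add: sum_triangle_swap sum_distrib_right)
  also have "\<dots> = b 1 * (\<Sum>i=1..N. repr_coeff 1 i * exp (- b i * x))"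
    using b_pos[of 1] N by (simp add: repr_coeff_def sum_distrib_left)
  finally show ?thesis .
qed

lemma memory_integral_eq:
  assumes t: "t \<ge> 0"
  shows "integral {0..t} (\<lambda>s. Kmem N a b (t - s) * u s) = b 1 * v 1 t"
proof -
  let ?c = "\<lambda>i. b 1 * repr_coeff 1 i * exp (- b i * t)"
  have split: "Kmem N a b (t - s) * u s = (\<Sum>i=1..N. ?c i * (exp (b i * s) * u s))" for s
  proof -
    have "exp (- b i * (t - s)) = exp (- b i * t) * exp (b i * s)" for i
      by (simp add: algebra_simps flip: exp_add)
    then show ?thesis
      by (simp add: Kmem_eq_repr_coeff sum_distrib_left sum_distrib_right ac_simps)
  qed
  have "(\<lambda>s. exp (b i * s) * u s) integrable_on {0..t}" for i
    by (intro integrable_continuous_interval continuous_intros continuous_on_subset[OF continuous_on_u]) auto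
  then have "integral {0..t} (\<lambda>s. Kmem N a b (t - s) * u s)
      = (\<Sum>i=1..N. integral {0..t} (\<lambda>s. ?c i * (exp (b i * s) * u s)))"
    unfolding split by (intro integral_sum) (auto intro: integrable_on_mult_right)
  also have "\<dots> = b 1 * v_repr 1 t"
    by (simp add: v_repr_def conv_exp_def sum_distrib_left mult.assoc)
  finally show ?thesis using v_eq_v_repr[of 1 t] N t by simp
qed

definition v_rate :: "nat \<Rightarrow> real \<Rightarrow> real" where
  "v_rate j t = a j * u t - b j * v j t + (if j < N then b (Suc j) * v (Suc j) t else 0)"

lemma v_has_real_derivative:
  assumes "j \<in> {1..N}" "t \<ge> 0"
  shows "(v j has_real_derivative v_rate j t) (at t within {0..})"
proof (cases "j < N")
  case True
  then show ?thesis using v_ode[of j t] assms by (simp add: v_rate_def)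
next
  case False
  then have "j = N" using assms by auto
  then show ?thesis using vN_ode assms by (simp add: v_rate_def)
qed

lemma mass_conservation:
  assumes "t \<ge> 0"
  shows "u t + (\<Sum>j=1..N. v j t) = u0"
proof -
  have rates: "- (\<Sum>j=1..N. a j) * u x + b 1 * v 1 x + (\<Sum>j=1..N. v_rate j x) = 0" for x
  proof -
    obtain n where n: "N = Suc n" using N by (cases N) auto
    have "(\<Sum>j=1..N. if j < N then b (Suc j) * v (Suc j) x else 0) = (\<Sum>j=1..n. b (Suc j) * v (Suc j) x)"
      unfolding n by (simp add: sum.cl_ivl_Suc)
    also have "\<dots> = (\<Sum>j=Suc 1..N. b j * v j x)"
      unfolding n by (rule sum.shift_bounds_cl_Suc_ivl[symmetric])
    also have "\<dots> = (\<Sum>j=1..N. b j * v j x) - b 1 * v 1 x"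
      using N by (simp add: sum.atLeast_Suc_atMost)
    finally show ?thesis
      by (simp add: v_rate_def sum.distrib sum_subtractf sum_distrib_right)
  qed
  have "((\<lambda>x. u x + (\<Sum>j=1..N. v j x)) has_real_derivative 0) (at x within {0..})" if "x \<in> {0..}" for x
  proof -
    have "((\<lambda>x. u x + (\<Sum>j=1..N. v j x)) has_real_derivative
        - (\<Sum>j=1..N. a j) * u x + b 1 * v 1 x + (\<Sum>j=1..N. v_rate j x)) (at x within {0..})"
      using that by (intro DERIV_add u_ode DERIV_sum v_has_real_derivative) auto
    then show ?thesis by (simp only: rates)
  qed
  then obtain k where k: "\<forall>x\<in>{0..}. u x + (\<Sum>j=1..N. v j x) = k"
    using has_field_derivative_zero_constant[OF convex_real_interval(1)] by blast
  moreover have "u 0 + (\<Sum>j=1..N. v j 0) = u0"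
    using u_init v_init by simp
  ultimately show ?thesis
    using assms by (metis atLeast_iff order_refl)
qed

lemma v_eq_0_beyond_last_active:
  assumes inactive: "\<And>j. J < j \<Longrightarrow> j \<le> N \<Longrightarrow> a j = 0"
    and "J < j" "j \<le> N" "t \<ge> 0"
  shows "v j t = 0"
proof -
  have "J < j \<longrightarrow> (\<forall>t\<ge>0. v j t = 0)"
    using \<open>j \<le> N\<close>
  proof (induction j rule: inc_induct)
    case base
    show ?case
    proof (intro impI allI)
      fix t :: real assume "J < N" "t \<ge> 0"
      have "(v N has_real_derivative - b N * v N x) (at x within {0..})" if "x \<ge> 0" for x
        using vN_ode[OF that] inactive[of N] \<open>J < N\<close> by simp
      from decay_ode_solution_eq_0[OF this v_init \<open>t \<ge> 0\<close>] N show "v N t = 0" by simp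
    qed
  next
    case (step j)
    show ?case
    proof (intro impI allI)
      fix t :: real assume "J < j" "t \<ge> 0"
      have "(v j has_real_derivative - b j * v j x) (at x within {0..})" if "x \<ge> 0" for x
        using v_ode[of j x] step inactive[of j] \<open>J < j\<close> that by simp
      from decay_ode_solution_eq_0[OF this v_init \<open>t \<ge> 0\<close>] step.hyps \<open>J < j\<close>
      show "v j t = 0" by simp
    qed
  qed
  then show ?thesis using assms by simp
qed

lemma linear_chain_truncate:
  assumes J: "J \<in> {1..N}" and inactive: "\<And>j. J < j \<Longrightarrow> j \<le> N \<Longrightarrow> a j = 0"
  shows "linear_chain J a b u0 u v"
proof
  show "1 \<le> J" "u 0 = u0" using J u_init by auto
  show "inj_on b {1..J}" using J by (intro b_inj_on) auto
  show "0 \<le> a j" "0 < b j" "v j 0 = 0" if "j \<in> {1..J}" for j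
    using that J a_nonneg b_pos v_init by auto
  have "(\<Sum>j=1..N. a j) = (\<Sum>j=1..J. a j)"
    using J inactive by (intro sum.mono_neutral_right) auto
  then show "(u has_real_derivative - (\<Sum>j=1..J. a j) * u t + b 1 * v 1 t) (at t within {0..})"
    if "0 \<le> t" for t
    using u_ode that by simp
  show "(v j has_real_derivative a j * u t - b j * v j t + b (j + 1) * v (j + 1) t) (at t within {0..})"
    if "j \<in> {1..<J}" "0 \<le> t" for j t
    using v_ode that J by simp
  show "(v J has_real_derivative a J * u t - b J * v J t) (at t within {0..})" if t: "0 \<le> t" for t
  proof (cases "J < N")
    case True
    have "v (J + 1) t = 0"
      by (rule v_eq_0_beyond_last_active[OF inactive]) (use True t in auto)
    moreover have "J \<in> {1..<N}" using True J by simp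
    ultimately show ?thesis
      using v_ode[of J t] t by simp
  next
    case False
    then show ?thesis using vN_ode J t by simp
  qed
qed

end

section \<open>Convergence to the stationary state\<close>

locale linear_chain_active_end = linear_chain +
  assumes a_N_pos: "a N > 0"
begin

definition tail :: "nat \<Rightarrow> real" where
  "tail j = (\<Sum>k=j..N. a k)"

text \<open>The stationary state is \<open>equilibrium\<close> times \<open>(1, weight 1, \<dots>, weight N)\<close>.\<close>
definition weight :: "nat \<Rightarrow> real" where
  "weight j = tail j / b j"

definition equilibrium :: real where
  "equilibrium = u0 / (1 + (\<Sum>j=1..N. weight j))"

definition dev :: "real \<Rightarrow> nat \<Rightarrow> real" where
  "dev t j = (if j = 0 then u t else v j t / weight j) - equilibrium"

definition lyapunov :: "real \<Rightarrow> real" where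
  "lyapunov t = (dev t 0)^2 + (\<Sum>j=1..N. weight j * (dev t j)^2)"

definition lyapunov_rate :: "real \<Rightarrow> real" where
  "lyapunov_rate t = 2 * (dev t 0 * (tail 1 * (dev t 1 - dev t 0))
      + (\<Sum>j=1..N. dev t j * ((tail j - tail (Suc j)) * dev t 0 - tail j * dev t j
          + tail (Suc j) * dev t (Suc j))))"

definition dissipation :: "real \<Rightarrow> real" where
  "dissipation t = (\<Sum>j=1..N. tail j * (dev t j - dev t (j - 1))^2)"

lemma tail_ge_a_N: "j \<in> {1..N} \<Longrightarrow> a N \<le> tail j"
  unfolding tail_def by (rule member_le_sum) (use a_nonneg in auto)

lemma tail_Suc: "j \<le> N \<Longrightarrow> tail j = a j + tail (Suc j)"
  unfolding tail_def by (rule sum.atLeast_Suc_atMost)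

lemma weight_pos: "j \<in> {1..N} \<Longrightarrow> weight j > 0"
  using tail_ge_a_N[of j] a_N_pos b_pos[of j] by (simp add: weight_def)

lemma b_mult_v_eq: "j \<in> {1..N} \<Longrightarrow> b j * v j t = tail j * (dev t j + equilibrium)"
  using weight_pos[of j] b_pos[of j] by (auto simp: dev_def weight_def field_simps)

lemma u_rate_eq:
  "- (\<Sum>j=1..N. a j) * u t + b 1 * v 1 t = tail 1 * (dev t 1 - dev t 0)"
  using b_mult_v_eq[of 1 t] N by (simp add: tail_def dev_def algebra_simps)

lemma v_rate_eq:
  assumes j: "j \<in> {1..N}"
  shows "v_rate j t = (tail j - tail (Suc j)) * dev t 0 - tail j * dev t j + tail (Suc j) * dev t (Suc j)"
proof -
  have "(if j < N then b (Suc j) * v (Suc j) t else 0) = tail (Suc j) * (dev t (Suc j) + equilibrium)"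
    using b_mult_v_eq[of "Suc j" t] j by (auto simp: tail_def)
  then show ?thesis
    using b_mult_v_eq[OF j, of t] tail_Suc[of j] j by (simp add: v_rate_def dev_def algebra_simps)
qed

lemma lyapunov_has_real_derivative:
  assumes "t \<ge> 0"
  shows "(lyapunov has_real_derivative lyapunov_rate t) (at t within {0..})"
proof -
  have "((\<lambda>t. weight j * (dev t j)^2) has_real_derivative 2 * dev t j * v_rate j t) (at t within {0..})"
    if j: "j \<in> {1..N}" for j
    using v_has_real_derivative[OF j assms] weight_pos[OF j] j
    by (auto intro!: derivative_eq_intros simp: dev_def[abs_def])
  moreover have "((\<lambda>t. (dev t 0)^2) has_real_derivative
      2 * dev t 0 * (tail 1 * (dev t 1 - dev t 0))) (at t within {0..})"
    using u_ode[OF assms] unfolding u_rate_eq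
    by (auto intro!: derivative_eq_intros simp: dev_def[abs_def])
  ultimately have "(lyapunov has_real_derivative 2 * dev t 0 * (tail 1 * (dev t 1 - dev t 0))
      + (\<Sum>j=1..N. 2 * dev t j * v_rate j t)) (at t within {0..})"
    unfolding lyapunov_def[abs_def] by (intro DERIV_add DERIV_sum) auto
  moreover have "(\<Sum>j=1..N. 2 * dev t j * v_rate j t) = 2 * (\<Sum>j=1..N. dev t j *
      ((tail j - tail (Suc j)) * dev t 0 - tail j * dev t j + tail (Suc j) * dev t (Suc j)))"
    unfolding sum_distrib_left by (rule sum.cong) (simp_all add: v_rate_eq)
  ultimately show ?thesis
    by (simp add: lyapunov_rate_def distrib_left mult.assoc)
qed

lemma lyapunov_rate_le: "lyapunov_rate t \<le> - dissipation t"
proof -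
  have "tail (Suc N) = 0" by (simp add: tail_def)
  moreover have "(\<Sum>j=1..N. (tail j - tail (Suc j)) * (dev t j - dev t 0)^2) \<ge> 0"
    using tail_Suc a_nonneg by (intro sum_nonneg) auto
  ultimately show ?thesis
    using sum_quadratic_by_parts[of "dev t" tail N] by (simp add: lyapunov_rate_def dissipation_def)
qed

lemma dev_balance:
  assumes "t \<ge> 0"
  shows "dev t 0 + (\<Sum>j=1..N. weight j * dev t j) = 0"
proof -
  have "weight j * dev t j = v j t - equilibrium * weight j" if "j \<in> {1..N}" for j
    using weight_pos[OF that] that by (simp add: dev_def algebra_simps)
  then have "(\<Sum>j=1..N. weight j * dev t j) = (\<Sum>j=1..N. v j t) - equilibrium * (\<Sum>j=1..N. weight j)"
    by (simp add: sum_subtractf sum_distrib_left)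
  then have "dev t 0 + (\<Sum>j=1..N. weight j * dev t j)
      = (u t + (\<Sum>j=1..N. v j t)) - equilibrium * (1 + (\<Sum>j=1..N. weight j))"
    by (simp add: dev_def algebra_simps)
  also have "\<dots> = 0"
  proof -
    have "(\<Sum>j=1..N. weight j) \<ge> 0"
      using weight_pos by (intro sum_nonneg) (auto intro: less_imp_le)
    then show ?thesis
      using mass_conservation[OF assms] by (simp add: equilibrium_def)
  qed
  finally show ?thesis .
qed

lemma lyapunov_le_dissipation:
  assumes "t \<ge> 0"
  shows "lyapunov t \<le> real N * (\<Sum>j=1..N. weight j) / a N * dissipation t"
proof -
  let ?Q = "\<Sum>k=1..N. (dev t k - dev t (k - 1))^2"
  have "lyapunov t \<le> real N * (\<Sum>j=1..N. weight j) * ?Q"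
    unfolding lyapunov_def
    by (rule discrete_poincare_inequality) (use weight_pos dev_balance[OF assms] in \<open>auto intro: less_imp_le\<close>)
  also have "?Q \<le> dissipation t / a N"
  proof -
    have "a N * ?Q \<le> dissipation t"
      unfolding dissipation_def sum_distrib_left
      by (rule sum_mono) (use tail_ge_a_N in \<open>auto intro!: mult_right_mono\<close>)
    then show ?thesis using a_N_pos by (simp add: field_simps)
  qed
  then have "real N * (\<Sum>j=1..N. weight j) * ?Q \<le> real N * (\<Sum>j=1..N. weight j) * (dissipation t / a N)"
    using weight_pos by (intro mult_left_mono mult_nonneg_nonneg sum_nonneg) (auto intro: less_imp_le)
  finally show ?thesis by simp
qed

lemma u_tendsto_equilibrium: "(u \<longlongrightarrow> equilibrium) at_top"
proof -
  define C where "C = real N * (\<Sum>j=1..N. weight j) / a N"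
  have "weight N \<le> (\<Sum>j=1..N. weight j)"
    using N weight_pos by (intro member_le_sum) (auto intro: less_imp_le)
  then have "C > 0"
    using N a_N_pos weight_pos[of N] by (simp add: C_def)
  have decay: "lyapunov t \<le> lyapunov 0 * exp (- t / C)" if "t \<ge> 0" for t
  proof (rule exp_decay_of_differential_inequality[OF lyapunov_has_real_derivative _ \<open>C > 0\<close> that])
    fix x :: real assume "x \<ge> 0"
    then have "lyapunov x \<le> C * dissipation x"
      using lyapunov_le_dissipation by (simp add: C_def)
    then have "lyapunov x / C \<le> dissipation x"
      using \<open>C > 0\<close> by (simp add: pos_divide_le_eq mult.commute)
    then show "lyapunov_rate x \<le> - lyapunov x / C"
      using lyapunov_rate_le[of x] by linarith
  qed
  have bound: "(u t - equilibrium)^2 \<le> lyapunov 0 * exp (- t / C)" if "t \<ge> 0" for t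
  proof -
    have "(\<Sum>j=1..N. weight j * (dev t j)^2) \<ge> 0"
      using weight_pos by (intro sum_nonneg mult_nonneg_nonneg) (auto intro: less_imp_le)
    then show ?thesis
      using decay[OF that] by (simp add: lyapunov_def dev_def)
  qed
  have "((\<lambda>t. exp (- t / C)) \<longlongrightarrow> 0) at_top"
    using \<open>C > 0\<close> by real_asymp
  then have "((\<lambda>t. lyapunov 0 * exp (- t / C)) \<longlongrightarrow> 0) at_top"
    using tendsto_mult_left[of _ 0 at_top "lyapunov 0"] by simp
  moreover have "\<forall>\<^sub>F t in at_top. norm ((u t - equilibrium)^2) \<le> lyapunov 0 * exp (- t / C)"
    using eventually_ge_at_top[of 0] by eventually_elim (auto dest: bound)
  ultimately have "((\<lambda>t. (u t - equilibrium)^2) \<longlongrightarrow> 0) at_top"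
    by (rule Lim_null_comparison[rotated])
  then have "((\<lambda>t. sqrt ((u t - equilibrium)^2)) \<longlongrightarrow> sqrt 0) at_top"
    by (rule tendsto_real_sqrt)
  then have "((\<lambda>t. u t - equilibrium) \<longlongrightarrow> 0) at_top"
    by (simp add: tendsto_rabs_zero_iff)
  then show ?thesis
    by (rule LIM_zero_cancel)
qed

end

lemma (in linear_chain) u_eq_u0_if_inactive:
  assumes inactive: "\<And>j. j \<in> {1..N} \<Longrightarrow> a j = 0" and "t \<ge> 0"
  shows "u t = u0"
proof -
  have "(u has_real_derivative 0) (at x within {0..})" if "x \<in> {0..}" for x
  proof -
    have "v 1 x = 0"
      by (rule v_eq_0_beyond_last_active[where J = 0]) (use N inactive that in auto)
    then show ?thesis
      using u_ode[of x] inactive that by simp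
  qed
  then obtain k where "\<forall>x\<in>{0..}. u x = k"
    using has_field_derivative_zero_constant[OF convex_real_interval(1)] by blast
  then show ?thesis
    using u_init \<open>t \<ge> 0\<close> by auto
qed

lemma (in linear_chain) u_tendsto_stationary:
  "(u \<longlongrightarrow> u0 / (1 + (\<Sum>i=1..N. (1 / b i) * (\<Sum>j=i..N. a j)))) at_top"
proof (cases "\<exists>j\<in>{1..N}. a j > 0")
  case False
  have inactive: "a j = 0" if "j \<in> {1..N}" for j
  proof -
    have "\<not> a j > 0" using False that by blast
    then show ?thesis using a_nonneg[OF that] by simp
  qed
  have "\<forall>\<^sub>F t in at_top. u0 = u t"
    using eventually_ge_at_top[of "0::real"]
    by eventually_elim (rule u_eq_u0_if_inactive[OF inactive, symmetric])
  then have "(u \<longlongrightarrow> u0) at_top"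
    by (rule Lim_transform_eventually[OF tendsto_const])
  then show ?thesis
    using inactive by simp
next
  case True
  obtain J where J: "J \<in> {1..N}" "a J > 0"
    and inactive: "\<And>j. J < j \<Longrightarrow> j \<le> N \<Longrightarrow> a j = 0"
    using last_positive_index[OF True a_nonneg] by blast
  have "linear_chain_active_end J a b u0 u v"
    using linear_chain_truncate[OF J(1) inactive] J(2)
    by (simp add: linear_chain_active_end_def linear_chain_active_end_axioms_def)
  then interpret T: linear_chain_active_end J a b u0 u v .
  have tail: "(\<Sum>j=i..N. a j) = T.tail i" for i
    unfolding T.tail_def by (rule sum.mono_neutral_right) (use J inactive in auto)
  have "(\<Sum>i=1..N. (1 / b i) * (\<Sum>j=i..N. a j)) = (\<Sum>i=1..J. (1 / b i) * (\<Sum>j=i..N. a j))"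
  proof (rule sum.mono_neutral_right)
    show "\<forall>i\<in>{1..N} - {1..J}. 1 / b i * (\<Sum>j=i..N. a j) = 0"
      by (auto simp: tail T.tail_def)
  qed (use J in auto)
  also have "\<dots> = (\<Sum>i=1..J. T.weight i)"
    by (simp add: tail T.weight_def)
  finally show ?thesis
    using T.u_tendsto_equilibrium by (simp add: T.equilibrium_def)
qed

theorem theorem3p1:
  fixes N :: nat and a b :: "nat \<Rightarrow> real" and u0 :: real
    and u :: "real \<Rightarrow> real" and v :: "nat \<Rightarrow> real \<Rightarrow> real"
  assumes N: "N \<ge> 1"
    and a_nonneg: "\<And>j. j \<in> {1..N} \<Longrightarrow> a j \<ge> 0"
    and b_pos: "\<And>j. j \<in> {1..N} \<Longrightarrow> b j > 0"
    and b_distinct: "inj_on b {1..N}"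
    and u_ode: "\<And>t. t \<ge> 0 \<Longrightarrow>
       (u has_real_derivative (- (\<Sum>j=1..N. a j) * u t + b 1 * v 1 t)) (at t within {0..})"
    and v_ode: "\<And>j t. j \<in> {1..<N} \<Longrightarrow> t \<ge> 0 \<Longrightarrow>
       (v j has_real_derivative (a j * u t - b j * v j t + b (j+1) * v (j+1) t)) (at t within {0..})"
    and vN_ode: "\<And>t. t \<ge> 0 \<Longrightarrow>
       (v N has_real_derivative (a N * u t - b N * v N t)) (at t within {0..})"
    and u_init: "u 0 = u0"
    and v_init: "\<And>j. j \<in> {1..N} \<Longrightarrow> v j 0 = 0"
  shows "(\<forall>t\<ge>0. (u has_real_derivative
              (- (\<Sum>j=1..N. a j) * u t + integral {0..t} (\<lambda>s. Kmem N a b (t - s) * u s)))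
              (at t within {0..}))
       \<and> u 0 = u0
       \<and> (\<lambda>t. exp (- 0 * t) * Kmem N a b t) integrable_on {0..}
       \<and> (\<Sum>j=1..N. a j) = laplace (Kmem N a b) 0
       \<and> (\<forall>j\<in>{1..N}. \<forall>t\<ge>0. Kj b j t \<ge> 0)
       \<and> (\<forall>t\<ge>0. Kmem N a b t \<ge> 0)
       \<and> (u \<longlongrightarrow> u0 / (1 + (\<Sum>i=1..N. (1 / b i) * (\<Sum>j=i..N. a j)))) at_top"
proof -
  interpret linear_chain N a b u0 u v
    by (rule linear_chain.intro[OF assms])
  have K_integral: "(Kmem N a b has_integral (\<Sum>j=1..N. a j)) {0..}"
    using b_distinct b_pos by (intro Kmem_has_integral) auto
  have Kj_nonneg_all: "\<forall>j\<in>{1..N}. \<forall>t\<ge>0. Kj b j t \<ge> 0"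
    using b_pos by (auto intro!: Kj_nonneg b_inj_on intro: less_imp_le)
  then have "\<forall>t\<ge>0. Kmem N a b t \<ge> 0"
    using a_nonneg by (auto simp: Kmem_def intro!: sum_nonneg)
  moreover have "\<forall>t\<ge>0. (u has_real_derivative
      - (\<Sum>j=1..N. a j) * u t + integral {0..t} (\<lambda>s. Kmem N a b (t - s) * u s)) (at t within {0..})"
    using u_ode memory_integral_eq by simp
  ultimately show ?thesis
    using K_integral Kj_nonneg_all u_init u_tendsto_stationary
    by (auto simp: laplace_def integral_unique)
qed

end
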